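(* There exists a probability distribution of a random pair $(x,y)\in\mathbb{R}^3\times\mathbb{R}$ with finite second moments, $\Sigma=\mathbb{E}[xx^\top]$ invertible and $\Sigma_{ii}>0$ for all $i$, such that the Naive Bayes weight vector satisfies $w^{\mathrm{NB}}\neq w^*$ and, for every binary feature tree on $\{1,2,3\}$ and every admissible choice of least-squares weights at its nodes, the tree predictor satisfies $w^{\mathrm{tree}}\neq w^*$, where $w^*=\Sigma^{-1}b$ is the least-squares linear predictor.
   Context: Let $(x,y)$ be a random pair with $x=(x_1,\dots,x_n)\in\mathbb{R}^n$, $y\in\mathbb{R}$, finite second moments, $\Sigma:=\mathbb{E}[xx^\top]$ invertible with all $\Sigma_{ii}>0$, and $b:=\mathbb{E}[xy]\in\mathbb{R}^n$. The least-squares linear predictor is $w^*:=\Sigma^{-1}b=\arg\min_{w}\mathbb{E}[(\langle w,x\rangle-y)^2]$. The Naive Bayes weight vector is $w^{\mathrm{NB}}\in\mathbb{R}^n$ with $w^{\mathrm{NB}}_i:=b_i/\Sigma_{ii}$. A feature tree on $\{1,\dots,n\}$ is a finite rooted tree in which every internal node has at least one child and whose leaves are in bijection with $\{1,\dots,n\}$; it is binary if every internal node has at most two children. Each node $v$ computes a prediction $p_v(x)$: the leaf labeled $i$ outputs $p_i(x)=w^{(0)}_i x_i$ with $w^{(0)}_i:=b_i/\Sigma_{ii}$; an internal node $v$ with children $c_1,\dots,c_k$ outputs $p_v(x)=\sum_{j=1}^k u^v_j\,p_{c_j}(x)$, where $u^v\in\mathbb{R}^k$ is any minimizer (an admissible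 choice) of $u\mapsto\mathbb{E}\big[(\sum_{j=1}^k u_j p_{c_j}(x)-y)^2\big]$. By induction every $p_v$ is a linear function of $x$; the tree predictor $w^{\mathrm{tree}}\in\mathbb{R}^n$ is the vector with $p_{\mathrm{root}}(x)=\langle w^{\mathrm{tree}},x\rangle$ for all $x$. *)

theory Defs
  imports "HOL-Probability.Probability"
begin

datatype 'i ftree = Leaf 'i | Node "'i ftree list"

fun leaves :: "'i ftree \<Rightarrow> 'i list" where
  "leaves (Leaf i) = [i]"
| "leaves (Node cs) = concat (map leaves cs)"

fun binary_ftree :: "'i ftree \<Rightarrow> bool" where
  "binary_ftree (Leaf i) = True"
| "binary_ftree (Node cs) = (cs \<noteq> [] \<and> length cs \<le> 2 \<and> (\<forall>c\<in>set cs. binary_ftree c))"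

definition feature_tree :: "'i::finite ftree \<Rightarrow> bool" where
  "feature_tree T \<longleftrightarrow> distinct (leaves T) \<and> set (leaves T) = UNIV"

definition Sigma_mat :: "((real^'n) \<times> real) measure \<Rightarrow> real^'n^'n" where
  "Sigma_mat M = (\<chi> i j. integral\<^sup>L M (\<lambda>z. fst z $ i * fst z $ j))"

definition b_vec :: "((real^'n) \<times> real) measure \<Rightarrow> real^'n" where
  "b_vec M = (\<chi> i. integral\<^sup>L M (\<lambda>z. fst z $ i * snd z))"

definition w_star :: "((real^'n) \<times> real) measure \<Rightarrow> real^'n" where
  "w_star M = matrix_inv (Sigma_mat M) *v b_vec M"

definition w_NB :: "((real^'n) \<times> real) measure \<Rightarrow> real^'n" where
  "w_NB M = (\<chi> i. b_vec M $ i / Sigma_mat M $ i $ i)"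

definition comb_risk :: "((real^'n) \<times> real) measure \<Rightarrow> (real^'n) list \<Rightarrow> real list \<Rightarrow> real" where
  "comb_risk M ws u =
     integral\<^sup>L M (\<lambda>z. ((\<Sum>j<length ws. u ! j * (ws ! j \<bullet> fst z)) - snd z)\<^sup>2)"

text \<open>tree_pred M T w: for some admissible choice of least-squares weights at the
  nodes of T, the node's prediction is x \<mapsto> <w, x>.\<close>
inductive tree_pred :: "((real^'n) \<times> real) measure \<Rightarrow> 'n ftree \<Rightarrow> real^'n \<Rightarrow> bool"
  for M where
  leaf: "tree_pred M (Leaf i) (\<chi> k. if k = i then b_vec M $ i / Sigma_mat M $ i $ i else 0)"
| node: "list_all2 (tree_pred M) cs ws \<Longrightarrow> length u = length cs \<Longrightarrow>
         (\<forall>u'. length u' = length cs \<longrightarrow> comb_risk M ws u \<le> comb_risk M ws u') \<Longrightarrow>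
         tree_pred M (Node cs) (\<Sum>j<length cs. u ! j *\<^sub>R ws ! j)"

end

theory Submission
  imports Defs
begin

text \<open>
  Counterexample: the sample is the empirical (uniform) distribution on the three points
  (x,y) = ((0,0,1),1), ((0,1,0),-1), ((1,1,1),2) in R^3 x R.  Its second-moment matrix is
  invertible, the least-squares predictor is w* = (2,-1,1) with zero risk, and Naive Bayes
  gives (2,1/2,3/2).  The risk is a strictly convex quadratic, so a least-squares fit over a
  family of predictors is pinned down by its first-order condition.

  Along any binary feature tree we track an invariant of the weight vector computed for the
  leaf set S: if S is a proper subset of features the node computes exactly the least-squares
  optimum over the coordinates in S (explicit vectors restricted_opt S); at the root (S = all
  features) no multiple of the node's vector equals w*.  Leaves satisfy it; unary nodes keep
  it by uniqueness of the restricted optimum; binary nodes either merge two singletons into the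
  optimum over a pair, or combine the optimum over a singleton with the optimum over the
  complementary pair, and the span of those two vectors misses w*.
\<close>

definition empirical_measure :: "'a::topological_space set \<Rightarrow> 'a measure" where
  "empirical_measure A = distr (measure_pmf (pmf_of_set A)) borel id"

lemma prob_space_empirical_measure:
  "finite A \<Longrightarrow> A \<noteq> {} \<Longrightarrow> prob_space (empirical_measure A)"
  unfolding empirical_measure_def by (intro prob_space.prob_space_distr prob_space_measure_pmf) auto

lemma sets_empirical_measure [simp]: "sets (empirical_measure A) = sets borel"
  unfolding empirical_measure_def by simp

lemma integrable_empirical_measure:
  fixes g :: "'a::topological_space \<Rightarrow> real"
  assumes "finite A" "A \<noteq> {}" "g \<in> borel_measurable borel"
  shows "integrable (empirical_measure A) g"
  unfolding empirical_measure_def using assms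
  by (subst integrable_distr_eq) (simp_all add: integrable_measure_pmf_finite)

lemma integral_empirical_measure:
  fixes g :: "'a::topological_space \<Rightarrow> real"
  assumes "finite A" "A \<noteq> {}" "g \<in> borel_measurable borel"
  shows "integral\<^sup>L (empirical_measure A) g = (\<Sum>z\<in>A. g z) / card A"
  unfolding empirical_measure_def using assms
  by (simp add: integral_distr integral_pmf_of_set)

definition z1 :: "(real^3) \<times> real" where "z1 = (vector [0,0,1], 1)"
definition z2 :: "(real^3) \<times> real" where "z2 = (vector [0,1,0], -1)"
definition z3 :: "(real^3) \<times> real" where "z3 = (vector [1,1,1], 2)"

definition ex_dist :: "((real^3) \<times> real) measure" where
  "ex_dist = empirical_measure {z1, z2, z3}"

lemma integral_ex_dist:
  fixes g :: "(real^3) \<times> real \<Rightarrow> real"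
  assumes "continuous_on UNIV g"
  shows "integral\<^sup>L ex_dist g = (g z1 + g z2 + g z3) / 3"
proof -
  have "z1 \<noteq> z2" "z1 \<noteq> z3" "z2 \<noteq> z3"
    unfolding z1_def z2_def z3_def by (auto simp: vec_eq_iff forall_3)
  then show ?thesis
    unfolding ex_dist_def using assms
    by (subst integral_empirical_measure) (auto intro: borel_measurable_continuous_onI)
qed

lemma integrable_ex_dist:
  fixes g :: "(real^3) \<times> real \<Rightarrow> real"
  assumes "continuous_on UNIV g"
  shows "integrable ex_dist g"
  unfolding ex_dist_def using assms
  by (intro integrable_empirical_measure) (auto intro: borel_measurable_continuous_onI)

lemma Sigma_ex_dist: "Sigma_mat ex_dist $ i $ j =
    (fst z1 $ i * fst z1 $ j + fst z2 $ i * fst z2 $ j + fst z3 $ i * fst z3 $ j) / 3"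
  unfolding Sigma_mat_def by (simp add: integral_ex_dist continuous_intros)

lemma b_ex_dist: "b_vec ex_dist $ i = (fst z1 $ i * snd z1 + fst z2 $ i * snd z2 + fst z3 $ i * snd z3) / 3"
  unfolding b_vec_def by (simp add: integral_ex_dist continuous_intros)

definition Sigma_inv :: "real^3^3" where
  "Sigma_inv = (\<chi> i j. 3 * (if i = j then (if i = 1 then 3 else 1) else if i = 1 \<or> j = 1 then -1 else 0))"

lemma Sigma_ex_dist_inverse: "Sigma_mat ex_dist ** Sigma_inv = mat 1" "Sigma_inv ** Sigma_mat ex_dist = mat 1"
  by (auto simp: vec_eq_iff forall_3 Sigma_ex_dist Sigma_inv_def matrix_matrix_mult_def sum_3 mat_def
      z1_def z2_def z3_def)

lemma invertible_Sigma_ex_dist: "invertible (Sigma_mat ex_dist)"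
  using Sigma_ex_dist_inverse unfolding invertible_def by blast

(* The least-squares predictor w* = Sigma^-1 b; since b = Sigma (2,-1,1). *)
lemma w_star_ex_dist: "w_star ex_dist = vector [2, -1, 1]"
proof -
  have "matrix_inv (Sigma_mat ex_dist) ** Sigma_mat ex_dist = mat 1"
    unfolding matrix_inv_def by (rule someI2[of _ Sigma_inv]) (use Sigma_ex_dist_inverse in auto)
  moreover have "b_vec ex_dist = Sigma_mat ex_dist *v vector [2, -1, 1]"
    by (auto simp: vec_eq_iff forall_3 Sigma_ex_dist b_ex_dist matrix_vector_mult_def sum_3 z1_def z2_def z3_def)
  ultimately show ?thesis
    unfolding w_star_def by (simp add: matrix_vector_mul_assoc)
qed

definition leaf_weight :: "((real^'n) \<times> real) measure \<Rightarrow> 'n \<Rightarrow> real^'n" where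
  "leaf_weight M i = (\<chi> k. if k = i then b_vec M $ i / Sigma_mat M $ i $ i else 0)"

lemma leaf_weight_ex_dist:
  "leaf_weight ex_dist 1 = vector [2, 0, 0]" "leaf_weight ex_dist 2 = vector [0, 1/2, 0]"
  "leaf_weight ex_dist 3 = vector [0, 0, 3/2]"
  by (auto simp: vec_eq_iff forall_3 leaf_weight_def b_ex_dist Sigma_ex_dist z1_def z2_def z3_def)

definition sq_risk :: "((real^'n) \<times> real) measure \<Rightarrow> real^'n \<Rightarrow> real" where
  "sq_risk M w = integral\<^sup>L M (\<lambda>z. (w \<bullet> fst z - snd z)\<^sup>2)"

lemma comb_risk_eq_sq_risk: "comb_risk M ws u = sq_risk M (\<Sum>j<length ws. u ! j *\<^sub>R ws ! j)"
  unfolding comb_risk_def sq_risk_def by (simp add: inner_sum_left)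

lemma sq_risk_ex_dist: "sq_risk ex_dist w = ((w$3 - 1)\<^sup>2 + (w$2 + 1)\<^sup>2 + (w$1 + w$2 + w$3 - 2)\<^sup>2) / 3"
  unfolding sq_risk_def
  by (simp add: integral_ex_dist continuous_intros z1_def z2_def z3_def inner_vec_def sum_3 algebra_simps)

definition risk_grad :: "real^3 \<Rightarrow> real^3 \<Rightarrow> real" where
  "risk_grad v d = 2/3 * ((v$3 - 1) * d$3 + (v$2 + 1) * d$2 + (v$1 + v$2 + v$3 - 2) * (d$1 + d$2 + d$3))"

(* Exact second-order expansion; the quadratic term is positive definite. *)
lemma sq_risk_ex_dist_expand:
  "sq_risk ex_dist (v + d) = sq_risk ex_dist v + risk_grad v d + ((d$3)\<^sup>2 + (d$2)\<^sup>2 + (d$1 + d$2 + d$3)\<^sup>2) / 3"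
  unfolding sq_risk_ex_dist risk_grad_def by (simp add: power2_eq_square field_simps)

(* Strict convexity: if the derivative at v towards w vanishes, then v is a strict
  minimiser in that direction, so w cannot do as well unless w = v. *)
lemma sq_risk_ex_dist_unique:
  assumes le: "sq_risk ex_dist w \<le> sq_risk ex_dist v" and grad: "risk_grad v (w - v) = 0"
  shows "w = v"
proof -
  define d where "d = w - v"
  have "(d$3)\<^sup>2 + (d$2)\<^sup>2 + (d$1 + d$2 + d$3)\<^sup>2 \<le> 0"
    using sq_risk_ex_dist_expand[of v d] le grad by (simp add: d_def)
  then have "d$3 = 0" "d$2 = 0" "d$1 + d$2 + d$3 = 0"
    by (smt (verit) zero_le_power2 zero_eq_power2)+
  then have "d = 0" by (auto simp: vec_eq_iff forall_3)
  then show ?thesis by (simp add: d_def)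
qed

definition supported :: "real^'n \<Rightarrow> 'n set \<Rightarrow> bool" where
  "supported d S \<longleftrightarrow> (\<forall>k. k \<notin> S \<longrightarrow> d $ k = 0)"

lemma supported_leaf_weight: "supported (leaf_weight M i) {i}"
  by (simp add: supported_def leaf_weight_def)

lemma supported_scaleR: "supported d S \<Longrightarrow> supported (a *\<^sub>R d) S"
  by (simp add: supported_def)

lemma supported_add: "supported d S \<Longrightarrow> supported e S \<Longrightarrow> supported (d + e) S"
  by (simp add: supported_def)

lemma supported_diff: "supported d S \<Longrightarrow> supported e S \<Longrightarrow> supported (d - e) S"
  by (simp add: supported_def)

lemma supported_mono: "supported d S \<Longrightarrow> S \<subseteq> T \<Longrightarrow> supported d T"
  by (auto simp: supported_def)

lemma supported_pair_decomp:
  assumes "i \<noteq> j" "supported v {i, j}"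
    and "leaf_weight M i $ i \<noteq> 0" "leaf_weight M j $ j \<noteq> 0"
  shows "v = (v$i / leaf_weight M i $ i) *\<^sub>R leaf_weight M i + (v$j / leaf_weight M j $ j) *\<^sub>R leaf_weight M j"
  using assms by (auto simp: vec_eq_iff supported_def leaf_weight_def)

lemma UNIV_3: "(UNIV::3 set) = {1,2,3}"
  using exhaust_3 by auto

lemma proper_feature_sets:
  assumes "(S::3 set) \<noteq> {}" "S \<noteq> UNIV"
  shows "S = {1} \<or> S = {2} \<or> S = {3} \<or> S = {1,2} \<or> S = {1,3} \<or> S = {2,3}"
proof -
  have "S \<in> Pow {1,2,3}" using UNIV_3 by auto
  then show ?thesis using assms unfolding UNIV_3 by (simp add: Pow_insert insert_commute)
qed

(* The least-squares optimum among weight vectors supported on S, for S a proper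
  nonempty feature set. *)
definition restricted_opt :: "3 set \<Rightarrow> real^3" where
  "restricted_opt S =
     (if S = {1,2} then vector [3, -1, 0] else if S = {1,3} then vector [1, 0, 1]
      else if S = {2,3} then vector [0, -1/3, 5/3] else leaf_weight ex_dist (the_elem S))"

lemma restricted_opt_singleton: "restricted_opt {i} = leaf_weight ex_dist i"
  using exhaust_3[of i] by (auto simp: restricted_opt_def doubleton_eq_iff)

lemma restricted_opt_pairs:
  "restricted_opt {1,2} = vector [3, -1, 0]" "restricted_opt {1,3} = vector [1, 0, 1]"
  "restricted_opt {2,3} = vector [0, -1/3, 5/3]"
  by (simp_all add: restricted_opt_def doubleton_eq_iff)

lemma restricted_opt_supported:
  "S \<noteq> {} \<Longrightarrow> S \<noteq> UNIV \<Longrightarrow> supported (restricted_opt S) S"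
  by (drule (1) proper_feature_sets, elim disjE)
    (simp_all add: supported_def restricted_opt_singleton restricted_opt_pairs leaf_weight_ex_dist forall_3)

lemma restricted_opt_grad:
  "S \<noteq> {} \<Longrightarrow> S \<noteq> UNIV \<Longrightarrow> supported d S \<Longrightarrow> risk_grad (restricted_opt S) d = 0"
  by (drule (1) proper_feature_sets, elim disjE)
    (simp_all add: supported_def restricted_opt_singleton restricted_opt_pairs leaf_weight_ex_dist risk_grad_def)

lemma restricted_opt_unique:
  assumes "S \<noteq> {}" "S \<noteq> UNIV" "supported w S"
    and "sq_risk ex_dist w \<le> sq_risk ex_dist (restricted_opt S)"
  shows "w = restricted_opt S"
proof (rule sq_risk_ex_dist_unique)
  show "risk_grad (restricted_opt S) (w - restricted_opt S) = 0"
    using assms by (intro restricted_opt_grad supported_diff restricted_opt_supported)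
qed (use assms in simp)

lemma leaf_weight_ex_dist_diag: "leaf_weight ex_dist i $ i \<noteq> 0"
  using exhaust_3[of i] by (auto simp: leaf_weight_ex_dist)

lemma pair_node_weight:
  assumes ij: "i \<noteq> j"
    and opt: "\<And>a b. sq_risk ex_dist (u1 *\<^sub>R leaf_weight ex_dist i + u2 *\<^sub>R leaf_weight ex_dist j)
                     \<le> sq_risk ex_dist (a *\<^sub>R leaf_weight ex_dist i + b *\<^sub>R leaf_weight ex_dist j)"
  shows "u1 *\<^sub>R leaf_weight ex_dist i + u2 *\<^sub>R leaf_weight ex_dist j = restricted_opt {i, j}"
proof -
  have "card {i, j} \<noteq> card (UNIV :: 3 set)" using ij by simp
  then have ne: "{i, j} \<noteq> {}" and proper: "{i, j} \<noteq> UNIV" by auto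
  have "restricted_opt {i, j} = (restricted_opt {i, j} $ i / leaf_weight ex_dist i $ i) *\<^sub>R leaf_weight ex_dist i
      + (restricted_opt {i, j} $ j / leaf_weight ex_dist j $ j) *\<^sub>R leaf_weight ex_dist j"
    using ij ne proper
    by (intro supported_pair_decomp restricted_opt_supported leaf_weight_ex_dist_diag)
  then have "sq_risk ex_dist (u1 *\<^sub>R leaf_weight ex_dist i + u2 *\<^sub>R leaf_weight ex_dist j)
      \<le> sq_risk ex_dist (restricted_opt {i, j})"
    using opt by metis
  moreover have "supported (u1 *\<^sub>R leaf_weight ex_dist i + u2 *\<^sub>R leaf_weight ex_dist j) {i, j}"
    by (intro supported_add supported_scaleR supported_mono[OF supported_leaf_weight]) auto
  ultimately show ?thesis using ne proper by (intro restricted_opt_unique)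
qed

(* Key fact: w* is not in the span of the optima over a singleton and over the
  complementary pair.  This is where every binary tree fails. *)
lemma complementary_span_misses_w_star:
  assumes "S1 \<noteq> {}" "S2 \<noteq> {}" "S1 \<inter> S2 = {}" "S1 \<union> S2 = UNIV"
  shows "a *\<^sub>R restricted_opt S1 + b *\<^sub>R restricted_opt S2 \<noteq> w_star ex_dist"
proof -
  have "S1 \<noteq> UNIV" and S2: "S2 = UNIV - S1" using assms by auto
  consider "S1 = {1}" "S2 = {2,3}" | "S1 = {2}" "S2 = {1,3}" | "S1 = {3}" "S2 = {1,2}"
    | "S1 = {1,2}" "S2 = {3}" | "S1 = {1,3}" "S2 = {2}" | "S1 = {2,3}" "S2 = {1}"
    using proper_feature_sets[OF \<open>S1 \<noteq> {}\<close> \<open>S1 \<noteq> UNIV\<close>] unfolding S2 UNIV_3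
    by (elim disjE) (simp_all add: insert_Diff_if insert_commute)
  then show ?thesis
    by cases (simp_all add: vec_eq_iff forall_3 w_star_ex_dist restricted_opt_singleton
        restricted_opt_pairs leaf_weight_ex_dist)
qed

definition tree_inv :: "3 set \<Rightarrow> real^3 \<Rightarrow> bool" where
  "tree_inv S w \<longleftrightarrow>
     (S \<noteq> UNIV \<longrightarrow> w = restricted_opt S) \<and> (S = UNIV \<longrightarrow> (\<forall>t. t *\<^sub>R w \<noteq> w_star ex_dist))"

lemma tree_inv_leaf: "tree_inv {i} (leaf_weight ex_dist i)"
proof -
  have "card {i} \<noteq> card (UNIV :: 3 set)" by simp
  then have "{i} \<noteq> UNIV" by metis
  then show ?thesis by (simp add: tree_inv_def restricted_opt_singleton)
qed

lemma tree_inv_unary: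
  assumes "S \<noteq> {}" and inv: "tree_inv S w" and opt: "sq_risk ex_dist (u *\<^sub>R w) \<le> sq_risk ex_dist w"
  shows "tree_inv S (u *\<^sub>R w)"
proof (cases "S = UNIV")
  case True
  then show ?thesis using inv by (simp add: tree_inv_def)
next
  case False
  then have w: "w = restricted_opt S" using inv by (simp add: tree_inv_def)
  have "u *\<^sub>R w = restricted_opt S"
    using assms False w
    by (intro restricted_opt_unique supported_scaleR) (simp_all add: restricted_opt_supported)
  then show ?thesis using False w by (simp add: tree_inv_def)
qed

lemma tree_inv_binary:
  assumes ne: "S1 \<noteq> {}" "S2 \<noteq> {}" and disj: "S1 \<inter> S2 = {}"
    and inv: "tree_inv S1 w1" "tree_inv S2 w2"
    and opt: "\<And>a b. sq_risk ex_dist (u1 *\<^sub>R w1 + u2 *\<^sub>R w2) \<le> sq_risk ex_dist (a *\<^sub>R w1 + b *\<^sub>R w2)"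
  shows "tree_inv (S1 \<union> S2) (u1 *\<^sub>R w1 + u2 *\<^sub>R w2)"
proof -
  have "S1 \<noteq> UNIV" "S2 \<noteq> UNIV" using ne disj by auto
  then have w: "w1 = restricted_opt S1" "w2 = restricted_opt S2" using inv by (simp_all add: tree_inv_def)
  show ?thesis
  proof (cases "S1 \<union> S2 = UNIV")
    case True
    have "(t * u1) *\<^sub>R restricted_opt S1 + (t * u2) *\<^sub>R restricted_opt S2 \<noteq> w_star ex_dist" for t
      using ne disj True by (rule complementary_span_misses_w_star)
    then show ?thesis using True w by (simp add: tree_inv_def scaleR_add_right)
  next
    case False
    have "card (S1 \<union> S2) < card (UNIV :: 3 set)"
      using False by (intro psubset_card_mono) auto
    moreover have "card (S1 \<union> S2) = card S1 + card S2" using disj by (simp add: card_Un_disjoint)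
    moreover have "card S1 \<ge> 1" "card S2 \<ge> 1" using ne by (simp_all add: Suc_le_eq card_gt_0_iff)
    ultimately have "card S1 = 1" "card S2 = 1" by simp_all
    then obtain i j where S: "S1 = {i}" "S2 = {j}" by (auto simp: card_1_singleton_iff)
    then have "i \<noteq> j" using disj by auto
    have w_leaf: "w1 = leaf_weight ex_dist i" "w2 = leaf_weight ex_dist j"
      using w S by (simp_all add: restricted_opt_singleton)
    have "u1 *\<^sub>R w1 + u2 *\<^sub>R w2 = restricted_opt {i, j}"
      unfolding w_leaf by (rule pair_node_weight[OF \<open>i \<noteq> j\<close> opt[unfolded w_leaf]])
    then show ?thesis using False S by (simp add: tree_inv_def insert_commute)
  qed
qed

lemma leaves_nonempty: "binary_ftree T \<Longrightarrow> leaves T \<noteq> []"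
  by (induction T) (auto simp: neq_Nil_conv)

lemma tree_pred_inv:
  "tree_pred ex_dist T w \<Longrightarrow> binary_ftree T \<Longrightarrow> distinct (leaves T) \<Longrightarrow> tree_inv (set (leaves T)) w"
proof (induction rule: tree_pred.induct)
  case (leaf i)
  show ?case using tree_inv_leaf[of i] by (simp add: leaf_weight_def)
next
  case (node cs ws u)
  have bin: "\<forall>c\<in>set cs. binary_ftree c" and dist: "distinct (concat (map leaves cs))"
    using node.prems by simp_all
  have children_ne: "set (leaves c) \<noteq> {}" if "c \<in> set cs" for c
    using leaves_nonempty bin that by blast
  have opt: "sq_risk ex_dist (\<Sum>j<length cs. u ! j *\<^sub>R ws ! j) \<le> sq_risk ex_dist (\<Sum>j<length cs. u' ! j *\<^sub>R ws ! j)"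
    if "length u' = length cs" for u'
    using node.hyps(2) that list_all2_lengthD[OF node.IH] by (simp add: comb_risk_eq_sq_risk)
  from node.prems(1) consider c1 where "cs = [c1]" | c1 c2 where "cs = [c1, c2]"
    by (cases cs rule: remdups_adj.cases) auto
  then show ?case
  proof cases
    case (1 c1)
    then obtain w1 u1 where ws: "ws = [w1]" and u: "u = [u1]"
      using node.IH node.hyps(1) by (auto simp: list_all2_Cons1 length_Suc_conv)
    have "tree_inv (set (leaves c1)) (u1 *\<^sub>R w1)"
      using node.IH bin dist children_ne opt[of "[1]"] by (intro tree_inv_unary) (simp_all add: 1 ws u)
    then show ?thesis by (simp add: 1 ws u)
  next
    case (2 c1 c2)
    then obtain w1 w2 u1 u2 where ws: "ws = [w1, w2]" and u: "u = [u1, u2]"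
      using node.IH node.hyps(1) by (auto simp: list_all2_Cons1 length_Suc_conv)
    have "tree_inv (set (leaves c1) \<union> set (leaves c2)) (u1 *\<^sub>R w1 + u2 *\<^sub>R w2)"
    proof (rule tree_inv_binary)
      show "sq_risk ex_dist (u1 *\<^sub>R w1 + u2 *\<^sub>R w2) \<le> sq_risk ex_dist (a *\<^sub>R w1 + b *\<^sub>R w2)" for a b
        using opt[of "[a, b]"] by (simp add: 2 ws u numeral_2_eq_2)
    qed (use node.IH bin dist children_ne in \<open>simp_all add: 2 ws\<close>)
    then show ?thesis by (simp add: 2 ws u numeral_2_eq_2)
  qed
qed

lemma w_NB_ex_dist: "w_NB ex_dist = vector [2, 1/2, 3/2]"
  by (auto simp: vec_eq_iff forall_3 w_NB_def b_ex_dist Sigma_ex_dist z1_def z2_def z3_def)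

lemma Sigma_ex_dist_diag_pos: "Sigma_mat ex_dist $ i $ i > 0"
  using exhaust_3[of i] by (auto simp: Sigma_ex_dist z1_def z2_def z3_def)

theorem proposition2:
  "\<exists>M :: ((real^3) \<times> real) measure.
     prob_space M \<and> sets M = sets borel \<and>
     (\<forall>i. integrable M (\<lambda>z. (fst z $ i)\<^sup>2)) \<and> integrable M (\<lambda>z. (snd z)\<^sup>2) \<and>
     invertible (Sigma_mat M) \<and> (\<forall>i. Sigma_mat M $ i $ i > 0) \<and>
     w_NB M \<noteq> w_star M \<and>
     (\<forall>T w. feature_tree T \<and> binary_ftree T \<and> tree_pred M T w \<longrightarrow> w \<noteq> w_star M)"
proof (intro exI[of _ ex_dist] conjI allI impI)
  show "prob_space ex_dist" unfolding ex_dist_def by (simp add: prob_space_empirical_measure)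
  show "sets ex_dist = sets borel" by (simp add: ex_dist_def)
  show "integrable ex_dist (\<lambda>z. (fst z $ i)\<^sup>2)" "integrable ex_dist (\<lambda>z. (snd z)\<^sup>2)" for i
    by (simp_all add: integrable_ex_dist continuous_intros)
  show "invertible (Sigma_mat ex_dist)" "Sigma_mat ex_dist $ i $ i > 0" for i
    by (simp_all add: invertible_Sigma_ex_dist Sigma_ex_dist_diag_pos)
  show "w_NB ex_dist \<noteq> w_star ex_dist" by (simp add: w_NB_ex_dist w_star_ex_dist vec_eq_iff forall_3)
next
  fix T w assume "feature_tree T \<and> binary_ftree T \<and> tree_pred ex_dist T w"
  then have "tree_inv UNIV w" using tree_pred_inv[of T w] by (simp add: feature_tree_def)
  then show "w \<noteq> w_star ex_dist" using scaleR_one[of w] by (metis tree_inv_def)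
qed

end
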